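(* Consider the mini-batch method described in the context, and suppose Assumptions A1 and A3 hold. Let $A=8L^2+16cL^2$ and $B=8c+8$ with $c$ from A3, and $z_i(k)=\Pi_{\mathcal{X}}[v_i(k)]$. Then almost surely, for any $\check x\in\mathcal{X}$, all $i\in V$ and all $k\ge0$, $$\mathsf{E}\big[\|x_i(k+1)-\check x\|^2\mid\tilde{\mathcal F}_k\big]\le(1+A\alpha_k^2)\|v_i(k)-\check x\|^2-2\alpha_k\big(f_i(z_i(k))-f_i(\check x)\big)-\Big(\tfrac{3}{8c}-2\alpha_kL\Big)\mathrm{dist}^2(v_i(k),\mathcal{X})+B\alpha_k^2G_f^2.$$
   Context: Setting. There are $m$ agents $V=\{1,\dots,m\}$. Agent $i$ has $f_i:\mathbb{R}^d\to\mathbb{R}$ and $\mathcal{X}_i=\bigcap_{j\in I_i}\mathcal{X}_i^j$, with $I_1,\dots,I_m$ a partition of a finite index set; $\mathcal{X}=\bigcap_i\mathcal{X}_i$ (nonempty). $\Pi_Y$ is Euclidean projection onto closed convex $Y$, $\mathrm{dist}(x,Y)=\min_{v\in Y}\|x-v\|$. With weight matrices $W(k)$, stepsizes $\alpha_k>0$ and batch size $b\ge1$, the mini-batch method starts from (possibly random) $x_i(0)$ and for $k\ge0$ sets $v_i(k)=\sum_j[W(k)]_{ij}x_j(k)$, $\psi_i^0(k)=v_i(k)-\alpha_k\nabla f_i(v_i(k))$, $\psi_i^r(k)=\Pi_{\mathcal{X}_i^{\Omega_i^r(k)}}[\psi_i^{r-1}(k)]$ for $r=1,\dots,b$, $x_i(k+1)=\psi_i^b(k)$.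 Here $\Omega_i^1(k),\dots,\Omega_i^b(k)$ are mutually independent samples, independent of the past, of a random variable $\Omega_i(k)$ with values in $I_i$ (with a fixed distribution over $k$). $\tilde{\mathcal F}_k$ is the $\sigma$-algebra generated by $\{x_i(0):i\in V\}$ and $\{\Omega_i^r(\ell):0\le\ell\le k-1,1\le r\le b,i\in V\}$ (with $\tilde{\mathcal F}_0$ generated by the initial points). (A1) Each $\mathcal{X}_i^j$ closed convex; each $f_i$ convex, differentiable, $L$-Lipschitz gradient; $\|\nabla f_i(x)\|\le G_f$ for $x\in\mathcal{X}$. (A3) There is $c>0$ with $\mathrm{dist}^2(x,\mathcal{X})\le c\,\mathsf{E}[\mathrm{dist}^2(x,\mathcal{X}_i^{\Omega_i(k)})]$ for all $i\in V$, $x\in\mathbb{R}^d$. *)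

theory Defs
  imports "HOL-Analysis.Analysis" "HOL-Probability.Probability"
begin

primrec batch_proj :: "(nat \<Rightarrow> 'a::euclidean_space set) \<Rightarrow> (nat \<Rightarrow> nat) \<Rightarrow> nat \<Rightarrow> 'a \<Rightarrow> 'a" where
  "batch_proj Xc w 0 y = y"
| "batch_proj Xc w (Suc r) y = closest_point (Xc (w (Suc r))) (batch_proj Xc w r y)"

text \<open>The sigma-algebra tilde F_k generated by the initial points x_i(0) (i in V)
  and the samples Omega_i^r(l), l < k, 1 <= r <= b, i in V.  Agents are V = {0..<m}.\<close>
definition Ftil :: "'b measure \<Rightarrow> nat \<Rightarrow> nat \<Rightarrow> (nat \<Rightarrow> 'b \<Rightarrow> 'a::euclidean_space)
    \<Rightarrow> (nat \<Rightarrow> nat \<Rightarrow> nat \<Rightarrow> 'b \<Rightarrow> nat) \<Rightarrow> nat \<Rightarrow> 'b measure" where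
  "Ftil M m b x0 Om k = sigma (space M)
     ((\<Union>i\<in>{..<m}. {x0 i -` A \<inter> space M | A. A \<in> sets borel})
      \<union> (\<Union>i\<in>{..<m}. \<Union>l\<in>{..<k}. \<Union>r\<in>{1..b}. {Om i l r -` A \<inter> space M | A. True}))"

end

theory Submission
  imports Defs
begin

text \<open>
  A projection onto a closed convex set containing \<open>z\<close> lowers the squared distance to \<open>z\<close> by the
  squared length of the projection step. Hence the new iterate satisfies
  \<open>\<parallel>x\<^sub>i(k+1) - z\<parallel>\<^sup>2 \<le> \<parallel>y - z\<parallel>\<^sup>2 - dist\<^sup>2(y, X\<^sub>\<Omega>)\<close> for the gradient step \<open>y = v - \<alpha> \<nabla>f(v)\<close> and the
  first sampled set \<open>X\<^sub>\<Omega>\<close>. As \<open>y\<close> is \<open>F\<^sub>k\<close>-measurable and the sample is independent of \<open>F\<^sub>k\<close>,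
  conditioning replaces \<open>dist\<^sup>2(y, X\<^sub>\<Omega>)\<close> by its mean over the sample, which is at least
  \<open>dist\<^sup>2(y, X) / c\<close> by (A3). The rest is deterministic: the gradient inequality at \<open>v\<close> and at
  \<open>\<Pi>\<^sub>X(v)\<close>, the Lipschitz gradient and Young's inequality bound \<open>\<parallel>y - z\<parallel>\<^sup>2 - dist\<^sup>2(y, X) / c\<close>,
  using that (A3) forces \<open>1 \<le> c\<close> unless \<open>X\<close> is the whole space.
\<close>

section \<open>Projections onto closed convex sets\<close>

lemma infdist_eq_norm_closest_point:
  fixes a :: "'a::euclidean_space"
  assumes "closed S" "S \<noteq> {}"
  shows "infdist a S = norm (a - closest_point S a)"
  using setdist_closest_point[OF assms] by (simp add: infdist_eq_setdist dist_norm)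

lemma closest_point_sq_dist_le:
  fixes a z :: "'a::euclidean_space"
  assumes "convex S" "closed S" "z \<in> S"
  shows "(norm (closest_point S a - z))\<^sup>2 + (infdist a S)\<^sup>2 \<le> (norm (a - z))\<^sup>2"
proof -
  define p where "p = closest_point S a"
  have obtuse: "inner (a - p) (z - p) \<le> 0"
    unfolding p_def by (rule closest_point_dot[OF assms])
  have "infdist a S = norm (a - p)"
    unfolding p_def using assms(2,3) by (intro infdist_eq_norm_closest_point) auto
  moreover have "(norm (a - z))\<^sup>2 = (norm (a - p))\<^sup>2 + (norm (p - z))\<^sup>2 - 2 * inner (a - p) (z - p)"
    by (simp add: power2_norm_eq_inner inner_diff_left inner_diff_right inner_commute algebra_simps)
  ultimately show ?thesis
    using obtuse by (simp add: p_def)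
qed

lemma batch_proj_sq_dist_le:
  fixes y z :: "'a::euclidean_space"
  assumes "1 \<le> r"
    and "\<And>s. s \<in> {1..r} \<Longrightarrow> convex (S (w s)) \<and> closed (S (w s)) \<and> z \<in> S (w s)"
  shows "(norm (batch_proj S w r y - z))\<^sup>2 + (infdist y (S (w 1)))\<^sup>2 \<le> (norm (y - z))\<^sup>2"
  using assms
proof (induction r rule: dec_induct)
  case base
  then show ?case using closest_point_sq_dist_le[of "S (w 1)" z y] by simp
next
  case (step r)
  then have "convex (S (w (Suc r))) \<and> closed (S (w (Suc r))) \<and> z \<in> S (w (Suc r))"
    by simp
  then have "(norm (closest_point (S (w (Suc r))) (batch_proj S w r y) - z))\<^sup>2
      + (infdist (batch_proj S w r y) (S (w (Suc r))))\<^sup>2 \<le> (norm (batch_proj S w r y - z))\<^sup>2"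
    by (intro closest_point_sq_dist_le) auto
  then have "(norm (batch_proj S w (Suc r) y - z))\<^sup>2 \<le> (norm (batch_proj S w r y - z))\<^sup>2"
    unfolding batch_proj.simps by (smt (verit) zero_le_power2)
  moreover have "(norm (batch_proj S w r y - z))\<^sup>2 + (infdist y (S (w 1)))\<^sup>2 \<le> (norm (y - z))\<^sup>2"
    using step by simp
  ultimately show ?case by linarith
qed

section \<open>The deterministic descent inequality\<close>

lemma convex_on_imp_above_gradient:
  fixes f :: "'a::real_inner \<Rightarrow> real"
  assumes convex: "convex_on UNIV f"
    and deriv: "(f has_derivative (\<lambda>h. g \<bullet> h)) (at u)"
  shows "f u + g \<bullet> (w - u) \<le> f w"
proof -
  define \<phi> where "\<phi> t = f (u + t *\<^sub>R (w - u))" for t :: real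
  have "convex_on UNIV \<phi>"
  proof (rule convex_onI)
    fix t s s' :: real assume "0 < t" "t < 1"
    have "u + ((1 - t) * s + t * s') *\<^sub>R (w - u)
        = (1 - t) *\<^sub>R (u + s *\<^sub>R (w - u)) + t *\<^sub>R (u + s' *\<^sub>R (w - u))"
      by (simp add: algebra_simps)
    then show "\<phi> ((1 - t) *\<^sub>R s + t *\<^sub>R s') \<le> (1 - t) * \<phi> s + t * \<phi> s'"
      using convex_onD[OF convex, of t] \<open>0 < t\<close> \<open>t < 1\<close> by (simp add: \<phi>_def)
  qed simp
  moreover have "(\<phi> has_field_derivative g \<bullet> (w - u)) (at 0)"
  proof -
    have "((\<lambda>t::real. u + t *\<^sub>R (w - u)) has_derivative (\<lambda>t. t *\<^sub>R (w - u))) (at 0)"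
      by (auto intro!: derivative_eq_intros)
    moreover have "(f has_derivative (\<lambda>h. g \<bullet> h)) (at (u + 0 *\<^sub>R (w - u)))"
      using deriv by simp
    ultimately have "(\<phi> has_derivative (\<lambda>t. g \<bullet> (t *\<^sub>R (w - u)))) (at 0)"
      unfolding \<phi>_def by (rule has_derivative_compose)
    then have "(\<phi> has_derivative (\<lambda>t. (g \<bullet> (w - u)) * t)) (at 0)"
      by (simp add: mult.commute)
    then show ?thesis
      by (simp add: has_field_derivative_def)
  qed
  ultimately have "\<phi> 1 - \<phi> 0 \<ge> g \<bullet> (w - u) * (1 - 0)"
    by (intro convex_on_imp_above_tangent[where A = UNIV]) auto
  then show ?thesis by (simp add: \<phi>_def)
qed

lemma sq_add_le_twice_sq_add:
  fixes a b :: real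
  shows "(a + b)\<^sup>2 \<le> 2 * a\<^sup>2 + 2 * b\<^sup>2"
  using sum_squares_bound[of a b] by (simp add: power2_sum)

\<comment> \<open>\<open>D = \<parallel>v - z\<parallel>\<close>, \<open>d = dist(v, X)\<close>, \<open>dy = dist(y, X)\<close> for the gradient step \<open>y\<close> of \<open>v\<close>,
  \<open>n = \<parallel>\<nabla>f(v)\<parallel>\<close>, \<open>\<Delta> = f(\<Pi>\<^sub>X v) - f(z)\<close>\<close>
lemma descent_scalar_bound:
  fixes Y D d dy n \<Delta> \<alpha> G L c :: real
  assumes step: "Y \<le> D\<^sup>2 - 2 * \<alpha> * \<Delta> + 2 * \<alpha> * G * d + (\<alpha> * n)\<^sup>2"
    and grad: "n \<le> G + L * d" "0 \<le> n"
    and dist: "0 \<le> d" "d \<le> D" "d \<le> dy + \<alpha> * n"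
    and "0 \<le> L * d" "0 < \<alpha>" "0 < c"
    and c: "1 \<le> c \<or> d = 0 \<and> dy = 0"
  shows "Y - dy\<^sup>2 / c \<le> (1 + (8 * L\<^sup>2 + 16 * c * L\<^sup>2) * \<alpha>\<^sup>2) * D\<^sup>2 - 2 * \<alpha> * \<Delta>
           - (3 / (8 * c) - 2 * \<alpha> * L) * d\<^sup>2 + (8 * c + 8) * \<alpha>\<^sup>2 * G\<^sup>2"
proof -
  have "n\<^sup>2 \<le> (G + L * d)\<^sup>2" using grad by (simp add: power_mono)
  also have "\<dots> \<le> 2 * G\<^sup>2 + 2 * (L * d)\<^sup>2" by (rule sq_add_le_twice_sq_add)
  also have "\<dots> \<le> 2 * G\<^sup>2 + 2 * (L * D)\<^sup>2"
    using dist by (simp add: power_mono power_mult_distrib mult_left_mono)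
  finally have "(\<alpha> * n)\<^sup>2 \<le> 2 * (\<alpha>\<^sup>2 * G\<^sup>2) + 2 * (\<alpha>\<^sup>2 * L\<^sup>2 * D\<^sup>2)"
    using mult_left_mono[of _ _ "\<alpha>\<^sup>2"] by (fastforce simp: power_mult_distrib algebra_simps)
  moreover have "d\<^sup>2 / c \<le> 2 * (dy\<^sup>2 / c) + 2 * (\<alpha> * n)\<^sup>2"
  proof (cases "1 \<le> c")
    case True
    have "d\<^sup>2 \<le> 2 * dy\<^sup>2 + 2 * (\<alpha> * n)\<^sup>2"
      using dist power_mono[of d "dy + \<alpha> * n" 2] sq_add_le_twice_sq_add[of dy "\<alpha> * n"] by linarith
    then have "d\<^sup>2 / c \<le> 2 * (dy\<^sup>2 / c) + 2 * ((\<alpha> * n)\<^sup>2 / c)"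
      using True by (simp add: divide_right_mono add_divide_distrib[symmetric])
    moreover have "(\<alpha> * n)\<^sup>2 / c \<le> (\<alpha> * n)\<^sup>2"
      using True by (simp add: divide_le_eq mult_le_cancel_left1)
    ultimately show ?thesis by linarith
  qed (use c \<open>0 < c\<close> in auto)
  \<comment> \<open>AM-GM, absorbing the linear term in \<open>d\<close> into \<open>d\<^sup>2 / (8 c)\<close>\<close>
  moreover have "2 * \<alpha> * G * d \<le> 1 / 8 * (d\<^sup>2 / c) + 8 * (c * \<alpha>\<^sup>2 * G\<^sup>2)"
    using \<open>0 < c\<close> zero_le_power2[of "d - 8 * c * \<alpha> * G"]
    by (simp add: field_simps power2_eq_square)
  moreover have "(1 + (8 * L\<^sup>2 + 16 * c * L\<^sup>2) * \<alpha>\<^sup>2) * D\<^sup>2 - 2 * \<alpha> * \<Delta>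
           - (3 / (8 * c) - 2 * \<alpha> * L) * d\<^sup>2 + (8 * c + 8) * \<alpha>\<^sup>2 * G\<^sup>2
        = D\<^sup>2 + 8 * (\<alpha>\<^sup>2 * L\<^sup>2 * D\<^sup>2) + 16 * (c * \<alpha>\<^sup>2 * L\<^sup>2 * D\<^sup>2) - 2 * \<alpha> * \<Delta>
           - 3 / 8 * (d\<^sup>2 / c) + 2 * (\<alpha> * d * (L * d)) + 8 * (c * \<alpha>\<^sup>2 * G\<^sup>2) + 8 * (\<alpha>\<^sup>2 * G\<^sup>2)"
    by (simp add: algebra_simps power2_eq_square)
  moreover have "0 \<le> c * \<alpha>\<^sup>2 * L\<^sup>2 * D\<^sup>2" "0 \<le> \<alpha>\<^sup>2 * L\<^sup>2 * D\<^sup>2" "0 \<le> c * \<alpha>\<^sup>2 * G\<^sup>2" "0 \<le> \<alpha>\<^sup>2 * G\<^sup>2"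
    "0 \<le> \<alpha> * d * (L * d)"
    using \<open>0 < c\<close> \<open>0 < \<alpha>\<close> \<open>0 \<le> L * d\<close> dist by simp_all
  ultimately show ?thesis
    using step by linarith
qed

lemma gradient_step_sq_dist_le:
  fixes f :: "'a::euclidean_space \<Rightarrow> real"
  assumes convex: "convex_on UNIV f" and deriv: "\<And>y. (f has_derivative (\<lambda>h. g y \<bullet> h)) (at y)"
    and X: "closed X" "X \<noteq> {}"
    and bound: "norm (g (closest_point X v)) \<le> G" and "0 \<le> \<alpha>"
  shows "(norm (v - \<alpha> *\<^sub>R g v - u))\<^sup>2 \<le> (norm (v - u))\<^sup>2 - 2 * \<alpha> * (f (closest_point X v) - f u)
           + 2 * \<alpha> * G * infdist v X + (\<alpha> * norm (g v))\<^sup>2"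
proof -
  define p where "p = closest_point X v"
  have "f v + g v \<bullet> (u - v) \<le> f u" "f p + g p \<bullet> (v - p) \<le> f v"
    using convex_on_imp_above_gradient[OF convex deriv] by auto
  moreover have "- (g p \<bullet> (v - p)) \<le> G * infdist v X"
  proof -
    have "- (g p \<bullet> (v - p)) \<le> norm (g p) * norm (v - p)"
      using Cauchy_Schwarz_ineq2[of "g p" "v - p"] by linarith
    also have "\<dots> \<le> G * infdist v X"
      using bound infdist_eq_norm_closest_point[OF X, of v] by (simp add: p_def mult_right_mono)
    finally show ?thesis .
  qed
  ultimately have "f p - f u - G * infdist v X \<le> g v \<bullet> (v - u)"
    by (simp add: inner_diff_right)
  then have "2 * \<alpha> * (f p - f u - G * infdist v X) \<le> 2 * \<alpha> * (g v \<bullet> (v - u))"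
    using \<open>0 \<le> \<alpha>\<close> by (intro mult_left_mono) auto
  then have "2 * \<alpha> * (f p - f u) - 2 * \<alpha> * G * infdist v X \<le> 2 * \<alpha> * (g v \<bullet> (v - u))"
    by (simp add: algebra_simps)
  moreover have "(norm (v - \<alpha> *\<^sub>R g v - u))\<^sup>2
      = (norm (v - u))\<^sup>2 - 2 * \<alpha> * (g v \<bullet> (v - u)) + (\<alpha> * norm (g v))\<^sup>2"
    using dot_norm_neg[of "v - u" "\<alpha> *\<^sub>R g v"]
    by (simp add: inner_commute power_mult_distrib diff_diff_eq2 diff_add_eq_diff_diff_swap)
      (simp add: algebra_simps)
  ultimately show ?thesis
    by (simp add: p_def)
qed

lemma gradient_step_descent_bound:
  fixes f :: "'a::euclidean_space \<Rightarrow> real"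
  assumes convex: "convex_on UNIV f" and deriv: "\<And>y. (f has_derivative (\<lambda>h. g y \<bullet> h)) (at y)"
    and lipschitz: "\<And>y z. norm (g y - g z) \<le> L * norm (y - z)"
    and bound: "\<And>y. y \<in> X \<Longrightarrow> norm (g y) \<le> G"
    and X: "closed X" "X \<noteq> {}" and "u \<in> X"
    and "0 < \<alpha>" "0 < c" and c: "1 \<le> c \<or> (\<forall>y. infdist y X = 0)"
  shows "(norm (v - \<alpha> *\<^sub>R g v - u))\<^sup>2 - (infdist (v - \<alpha> *\<^sub>R g v) X)\<^sup>2 / c
    \<le> (1 + (8 * L\<^sup>2 + 16 * c * L\<^sup>2) * \<alpha>\<^sup>2) * (norm (v - u))\<^sup>2
       - 2 * \<alpha> * (f (closest_point X v) - f u)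
       - (3 / (8 * c) - 2 * \<alpha> * L) * (infdist v X)\<^sup>2 + (8 * c + 8) * \<alpha>\<^sup>2 * G\<^sup>2"
proof (rule descent_scalar_bound)
  define p where "p = closest_point X v"
  have "p \<in> X" unfolding p_def by (rule closest_point_in_set[OF X])
  have d: "infdist v X = norm (v - p)"
    unfolding p_def by (rule infdist_eq_norm_closest_point[OF X])
  show "(norm (v - \<alpha> *\<^sub>R g v - u))\<^sup>2 \<le> (norm (v - u))\<^sup>2 - 2 * \<alpha> * (f (closest_point X v) - f u)
           + 2 * \<alpha> * G * infdist v X + (\<alpha> * norm (g v))\<^sup>2"
    using \<open>p \<in> X\<close> bound \<open>0 < \<alpha>\<close>
    by (intro gradient_step_sq_dist_le[OF convex deriv X]) (auto simp: p_def)
  have "norm (g v) \<le> norm (g p) + norm (g v - g p)"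
    by (rule norm_triangle_sub)
  then show "norm (g v) \<le> G + L * infdist v X"
    unfolding d using bound[OF \<open>p \<in> X\<close>] lipschitz[of v p] by linarith
  show "0 \<le> L * infdist v X"
    unfolding d using norm_ge_zero[of "g v - g p"] lipschitz[of v p] by linarith
  show "infdist v X \<le> norm (v - u)"
    using infdist_le[OF \<open>u \<in> X\<close>] by (simp add: dist_norm)
  show "infdist v X \<le> infdist (v - \<alpha> *\<^sub>R g v) X + \<alpha> * norm (g v)"
    using infdist_triangle[of v X "v - \<alpha> *\<^sub>R g v"] \<open>0 < \<alpha>\<close> by (simp add: dist_norm)
qed (use \<open>0 < \<alpha>\<close> \<open>0 < c\<close> c in \<open>auto simp: infdist_nonneg\<close>)

section \<open>The filtration and measurability of the iterates\<close>

definition Ftil_generator :: "'b measure \<Rightarrow> nat \<Rightarrow> nat \<Rightarrow> (nat \<Rightarrow> 'b \<Rightarrow> 'a::euclidean_space)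
    \<Rightarrow> (nat \<Rightarrow> nat \<Rightarrow> nat \<Rightarrow> 'b \<Rightarrow> nat) \<Rightarrow> nat \<Rightarrow> 'b set set" where
  "Ftil_generator M m b x0 Om k =
     (\<Union>i\<in>{..<m}. {x0 i -` A \<inter> space M | A. A \<in> sets borel})
     \<union> (\<Union>i\<in>{..<m}. \<Union>l\<in>{..<k}. \<Union>r\<in>{1..b}. {Om i l r -` A \<inter> space M | A. True})"

lemma Ftil_generator_mono: "k \<le> k' \<Longrightarrow> Ftil_generator M m b x0 Om k \<subseteq> Ftil_generator M m b x0 Om k'"
  unfolding Ftil_generator_def by (intro Un_mono UN_mono order_refl) auto

lemma Ftil_generator_Pow: "Ftil_generator M m b x0 Om k \<subseteq> Pow (space M)"
  unfolding Ftil_generator_def by auto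

lemma sets_Ftil: "sets (Ftil M m b x0 Om k) = sigma_sets (space M) (Ftil_generator M m b x0 Om k)"
  unfolding Ftil_def Ftil_generator_def[symmetric] using sets_measure_of[OF Ftil_generator_Pow] .

lemma space_Ftil: "space (Ftil M m b x0 Om k) = space M"
  unfolding Ftil_def Ftil_generator_def[symmetric] using space_measure_of[OF Ftil_generator_Pow] .

lemma subalgebra_Ftil_mono:
  "k \<le> k' \<Longrightarrow> subalgebra (Ftil M m b x0 Om k') (Ftil M m b x0 Om k)"
  unfolding subalgebra_def sets_Ftil space_Ftil by (simp add: Ftil_generator_mono sigma_sets_mono')

lemma measurable_Ftil_initial:
  fixes x0 :: "nat \<Rightarrow> 'b \<Rightarrow> 'a::euclidean_space"
  assumes "i < m"
  shows "x0 i \<in> borel_measurable (Ftil M m b x0 Om k)"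
proof (rule measurableI)
  fix A :: "'a set" assume "A \<in> sets borel"
  with assms have "x0 i -` A \<inter> space M \<in> Ftil_generator M m b x0 Om k"
    unfolding Ftil_generator_def by blast
  then show "x0 i -` A \<inter> space (Ftil M m b x0 Om k) \<in> sets (Ftil M m b x0 Om k)"
    unfolding sets_Ftil space_Ftil by (rule sigma_sets.Basic)
qed simp

lemma measurable_Ftil_sample:
  assumes "i < m" "l < k" "r \<in> {1..b}"
  shows "Om i l r \<in> measurable (Ftil M m b x0 Om k) (count_space UNIV)"
proof (rule measurableI)
  fix A :: "nat set"
  from assms have "Om i l r -` A \<inter> space M \<in> Ftil_generator M m b x0 Om k"
    unfolding Ftil_generator_def by blast
  then show "Om i l r -` A \<inter> space (Ftil M m b x0 Om k) \<in> sets (Ftil M m b x0 Om k)"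
    unfolding sets_Ftil space_Ftil by (rule sigma_sets.Basic)
qed simp

lemma subalgebra_Ftil:
  assumes "\<forall>i<m. x0 i \<in> borel_measurable M"
    and "\<forall>i<m. \<forall>l. \<forall>r\<in>{1..b}. Om i l r \<in> measurable M (count_space UNIV)"
  shows "subalgebra M (Ftil M m b x0 Om k)"
proof -
  have "Ftil_generator M m b x0 Om k \<subseteq> sets M"
    using assms unfolding Ftil_generator_def by (fastforce intro: measurable_sets)
  then show ?thesis
    unfolding subalgebra_def sets_Ftil space_Ftil by (simp add: sets.sigma_sets_subset)
qed

lemma borel_measurable_batch_proj:
  fixes Y :: "'b \<Rightarrow> 'a::euclidean_space"
  assumes sets: "\<forall>n\<in>J. convex (S n) \<and> closed (S n) \<and> S n \<noteq> {}"
    and samples: "\<forall>r\<in>{1..b}. w r \<in> measurable N (count_space UNIV)"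
    and range: "\<forall>r\<in>{1..b}. \<forall>\<omega>\<in>space N. w r \<omega> \<in> J"
    and "Y \<in> borel_measurable N"
  shows "(\<lambda>\<omega>. batch_proj S (\<lambda>r. w r \<omega>) b (Y \<omega>)) \<in> borel_measurable N"
proof -
  have "(\<lambda>\<omega>. batch_proj S (\<lambda>r. w r \<omega>) r (Y \<omega>)) \<in> borel_measurable N" if "r \<le> b" for r
    using that
  proof (induction r)
    case 0
    then show ?case using \<open>Y \<in> borel_measurable N\<close> by simp
  next
    case (Suc r)
    define P where "P \<omega> = batch_proj S (\<lambda>r. w r \<omega>) r (Y \<omega>)" for \<omega>
    have "P \<in> borel_measurable N" using Suc unfolding P_def by simp
    \<comment> \<open>\<open>closest_point (S n)\<close> need not be measurable for \<open>n \<notin> J\<close>; such indices do not occur on \<open>space N\<close>\<close>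
    define h where "h = (\<lambda>n \<omega>. if n \<in> J then closest_point (S n) (P \<omega>) else P \<omega>)"
    have "h n \<in> borel_measurable N" for n
    proof (cases "n \<in> J")
      case True
      then have "closest_point (S n) \<in> borel_measurable borel"
        using sets by (intro borel_measurable_continuous_onI continuous_on_closest_point) auto
      with \<open>P \<in> borel_measurable N\<close> True show ?thesis
        unfolding h_def by (simp add: measurable_compose)
    qed (use \<open>P \<in> borel_measurable N\<close> in \<open>simp add: h_def\<close>)
    then have "(\<lambda>\<omega>. h (w (Suc r) \<omega>) \<omega>) \<in> borel_measurable N"
      by (rule measurable_compose_countable) (use samples Suc.prems in auto)
    then show ?case
      by (rule measurable_cong[THEN iffD1, rotated])
        (use range Suc.prems in \<open>auto simp: h_def P_def\<close>)
  qed
  then show ?thesis by simp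
qed

lemma continuous_on_of_norm_diff_le:
  fixes g :: "'a::real_normed_vector \<Rightarrow> 'b::real_normed_vector"
  assumes "\<And>y z. norm (g y - g z) \<le> L * norm (y - z)"
  shows "continuous_on UNIV g"
proof -
  have "\<bar>L\<bar>-lipschitz_on UNIV g"
  proof (rule lipschitz_onI)
    fix y z :: 'a
    have "L * norm (y - z) \<le> \<bar>L\<bar> * norm (y - z)"
      by (intro mult_right_mono) auto
    then show "dist (g y) (g z) \<le> \<bar>L\<bar> * dist y z"
      using assms[of y z] by (simp add: dist_norm)
  qed simp
  then show ?thesis by (rule lipschitz_on_continuous_on)
qed

lemma borel_measurable_gradient_step:
  fixes V :: "'b \<Rightarrow> 'a::euclidean_space"
  assumes "V \<in> borel_measurable N" "continuous_on UNIV g"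
  shows "(\<lambda>\<omega>. V \<omega> - \<alpha> *\<^sub>R g (V \<omega>)) \<in> borel_measurable N"
proof -
  have "(\<lambda>\<omega>. g (V \<omega>)) \<in> borel_measurable N"
    using assms(1) borel_measurable_continuous_onI[OF assms(2)] by (rule measurable_compose)
  with assms(1) show ?thesis
    by (intro borel_measurable_diff borel_measurable_scaleR measurable_const) simp_all
qed

lemma borel_measurable_Ftil_iterate:
  fixes x :: "nat \<Rightarrow> nat \<Rightarrow> 'b \<Rightarrow> 'a::euclidean_space"
  assumes x0: "\<forall>i<m. x 0 i \<in> borel_measurable M"
    and samples: "\<forall>i<m. \<forall>k. \<forall>r\<in>{1..b}. Om i k r \<in> measurable M (count_space UNIV)"
    and range: "\<forall>i<m. \<forall>k. \<forall>r\<in>{1..b}. \<forall>\<omega>\<in>space M. Om i k r \<omega> \<in> J"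
    and sets: "\<forall>n\<in>J. convex (S n) \<and> closed (S n) \<and> S n \<noteq> {}"
    and grad: "\<forall>i<m. continuous_on UNIV (g i)"
    and step: "\<forall>k. \<forall>i<m. \<forall>\<omega>\<in>space M.
               x (Suc k) i \<omega> = batch_proj S (\<lambda>r. Om i k r \<omega>) b
                 ((\<Sum>j<m. W k i j *\<^sub>R x k j \<omega>) - \<alpha> k *\<^sub>R g i (\<Sum>j<m. W k i j *\<^sub>R x k j \<omega>))"
  shows "i < m \<Longrightarrow> x k i \<in> borel_measurable (Ftil M m b (x 0) Om k)"
proof (induction k arbitrary: i)
  case 0
  then show ?case by (rule measurable_Ftil_initial)
next
  case (Suc k)
  let ?F = "Ftil M m b (x 0) Om (Suc k)"
  have "subalgebra ?F (Ftil M m b (x 0) Om k)"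
    by (rule subalgebra_Ftil_mono) simp
  then have "x k j \<in> borel_measurable ?F" if "j < m" for j
    using Suc.IH[OF that] by (rule measurable_from_subalg)
  then have "(\<lambda>\<omega>. \<Sum>j<m. W k i j *\<^sub>R x k j \<omega>) \<in> borel_measurable ?F"
    by (intro borel_measurable_sum borel_measurable_scaleR measurable_const) auto
  then have y: "(\<lambda>\<omega>. (\<Sum>j<m. W k i j *\<^sub>R x k j \<omega>) - \<alpha> k *\<^sub>R g i (\<Sum>j<m. W k i j *\<^sub>R x k j \<omega>))
      \<in> borel_measurable ?F"
    using grad Suc.prems by (intro borel_measurable_gradient_step) auto
  have "\<forall>r\<in>{1..b}. Om i k r \<in> measurable ?F (count_space UNIV)"
    using Suc.prems by (simp add: measurable_Ftil_sample)
  moreover have "\<forall>r\<in>{1..b}. \<forall>\<omega>\<in>space ?F. Om i k r \<omega> \<in> J"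
    using range Suc.prems by (simp add: space_Ftil)
  ultimately have "(\<lambda>\<omega>. batch_proj S (\<lambda>r. Om i k r \<omega>) b
      ((\<Sum>j<m. W k i j *\<^sub>R x k j \<omega>) - \<alpha> k *\<^sub>R g i (\<Sum>j<m. W k i j *\<^sub>R x k j \<omega>))) \<in> borel_measurable ?F"
    using y by (rule borel_measurable_batch_proj[OF sets])
  then show ?case
    by (rule measurable_cong[THEN iffD1, rotated]) (use step Suc.prems in \<open>auto simp: space_Ftil\<close>)
qed

section \<open>Conditioning on an independent discrete sample\<close>

lemma sum_mult_indicator_fiber:
  fixes h :: "'c \<Rightarrow> 'r::comm_semiring_1"
  assumes "finite J" "w \<omega> \<in> J" "\<omega> \<in> A"
  shows "(\<Sum>j\<in>J. h j * indicator (w -` {j} \<inter> A) \<omega>) = h (w \<omega>)"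
proof -
  have "(\<Sum>j\<in>J. h j * indicator (w -` {j} \<inter> A) \<omega>) = (\<Sum>j\<in>J. if w \<omega> = j then h j else 0)"
    using assms(3) by (intro sum.cong) (auto simp: indicator_def)
  also have "\<dots> = h (w \<omega>)"
    using assms(1,2) by simp
  finally show ?thesis .
qed

lemma (in prob_space) integral_comp_finite_range:
  fixes h :: "'c \<Rightarrow> real"
  assumes "finite J" "w \<in> measurable M (count_space UNIV)" "\<forall>\<omega>\<in>space M. w \<omega> \<in> J"
  shows "(\<integral>\<omega>. h (w \<omega>) \<partial>M) = (\<Sum>j\<in>J. h j * prob (w -` {j} \<inter> space M))"
proof -
  have fiber: "w -` {j} \<inter> space M \<in> events" for j
    using assms(2) by (rule measurable_sets) simp
  have "(\<integral>\<omega>. h (w \<omega>) \<partial>M) = (\<integral>\<omega>. (\<Sum>j\<in>J. h j * indicator (w -` {j} \<inter> space M) \<omega>) \<partial>M)"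
    using assms by (intro Bochner_Integration.integral_cong refl sum_mult_indicator_fiber[symmetric]) auto
  also have "\<dots> = (\<Sum>j\<in>J. (\<integral>\<omega>. h j * indicator (w -` {j} \<inter> space M) \<omega> \<partial>M))"
    using fiber by (intro Bochner_Integration.integral_sum integrable_mult_right integrable_real_indicator)
      (auto simp: less_top[symmetric])
  also have "\<dots> = (\<Sum>j\<in>J. h j * prob (w -` {j} \<inter> space M))"
    using fiber by simp
  finally show ?thesis .
qed

lemma (in sigma_finite_subalgebra) nn_cond_exp_sum_finite:
  assumes "finite J" "\<And>j. j \<in> J \<Longrightarrow> h j \<in> borel_measurable M"
  shows "AE \<omega> in M. nn_cond_exp M F (\<lambda>\<omega>. \<Sum>j\<in>J. h j \<omega>) \<omega> = (\<Sum>j\<in>J. nn_cond_exp M F (h j) \<omega>)"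
  using assms
proof (induction J rule: finite_induct)
  case empty
  have "AE \<omega> in M. 0 = nn_cond_exp M F (\<lambda>_. 0) \<omega>"
    by (rule nn_cond_exp_F_meas) simp
  then show ?case by auto
next
  case (insert a J)
  have "AE \<omega> in M. nn_cond_exp M F (h a) \<omega> + nn_cond_exp M F (\<lambda>\<omega>. \<Sum>j\<in>J. h j \<omega>) \<omega>
      = nn_cond_exp M F (\<lambda>\<omega>. h a \<omega> + (\<Sum>j\<in>J. h j \<omega>)) \<omega>"
    using insert.prems by (intro nn_cond_exp_sum) auto
  with insert show ?case by auto
qed

lemma (in prob_space) nn_cond_exp_indicator_indep:
  assumes F: "subalgebra M F" and "E \<in> events"
    and indep: "\<forall>A\<in>sets F. prob (A \<inter> E) = prob A * prob E"
  shows "AE \<omega> in M. nn_cond_exp M F (indicator E) \<omega> = ennreal (prob E)"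
proof -
  interpret finite_measure_subalgebra M F by unfold_locales (rule F)
  have "AE \<omega> in M. ennreal (prob E) = nn_cond_exp M F (indicator E) \<omega>"
  proof (rule nn_cond_exp_charact)
    fix A assume "A \<in> sets F"
    then have "A \<in> events" using F by (auto simp: subalgebra_def)
    have "(\<integral>\<^sup>+ \<omega> \<in> A. indicator E \<omega> \<partial>M) = emeasure M (A \<inter> E)"
      using \<open>A \<in> events\<close> \<open>E \<in> events\<close>
      by (simp add: indicator_inter_arith[symmetric] mult.commute)
    also have "\<dots> = ennreal (prob E) * emeasure M A"
      using indep \<open>A \<in> sets F\<close> by (simp add: emeasure_eq_measure ennreal_mult' mult.commute)
    also have "\<dots> = (\<integral>\<^sup>+ \<omega> \<in> A. ennreal (prob E) \<partial>M)"
      using \<open>A \<in> events\<close> by (simp add: nn_integral_cmult_indicator)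
    finally show "(\<integral>\<^sup>+ \<omega> \<in> A. indicator E \<omega> \<partial>M) = (\<integral>\<^sup>+ \<omega> \<in> A. ennreal (prob E) \<partial>M)" .
  qed (use \<open>E \<in> events\<close> in auto)
  then show ?thesis by auto
qed

lemma (in sigma_finite_subalgebra) nn_cond_exp_comp_finite_range:
  fixes w :: "'a \<Rightarrow> 'c::countable"
  assumes "finite J" "w \<in> measurable M (count_space UNIV)" "\<forall>\<omega>\<in>space M. w \<omega> \<in> J"
    and H: "\<And>j. H j \<in> borel_measurable F"
  shows "AE \<omega> in M. nn_cond_exp M F (\<lambda>\<omega>. H (w \<omega>) \<omega>) \<omega>
           = (\<Sum>j\<in>J. H j \<omega> * nn_cond_exp M F (indicator (w -` {j} \<inter> space M)) \<omega>)"
proof -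
  define E where "E j = w -` {j} \<inter> space M" for j
  have E: "E j \<in> sets M" for j
    unfolding E_def using assms(2) by (rule measurable_sets) simp
  have H_M: "H j \<in> borel_measurable M" for j
    using H by (rule measurable_from_subalg[OF subalg])
  then have HE: "(\<lambda>\<omega>. H j \<omega> * indicator (E j) \<omega>) \<in> borel_measurable M" for j
    using E by measurable
  have "AE \<omega> in M. nn_cond_exp M F (\<lambda>\<omega>. H (w \<omega>) \<omega>) \<omega>
      = nn_cond_exp M F (\<lambda>\<omega>. \<Sum>j\<in>J. H j \<omega> * indicator (E j) \<omega>) \<omega>"
  proof (rule nn_cond_exp_cong)
    show "AE \<omega> in M. H (w \<omega>) \<omega> = (\<Sum>j\<in>J. H j \<omega> * indicator (E j) \<omega>)"
      unfolding E_def using assms(1,3) by (intro AE_I2 sum_mult_indicator_fiber[symmetric]) auto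
  qed (use H_M assms(2) HE in \<open>auto intro: measurable_compose_countable\<close>)
  moreover have "AE \<omega> in M. nn_cond_exp M F (\<lambda>\<omega>. \<Sum>j\<in>J. H j \<omega> * indicator (E j) \<omega>) \<omega>
      = (\<Sum>j\<in>J. nn_cond_exp M F (\<lambda>\<omega>. H j \<omega> * indicator (E j) \<omega>) \<omega>)"
    using \<open>finite J\<close> HE by (rule nn_cond_exp_sum_finite)
  moreover have "AE \<omega> in M. \<forall>j\<in>J. H j \<omega> * nn_cond_exp M F (indicator (E j)) \<omega>
      = nn_cond_exp M F (\<lambda>\<omega>. H j \<omega> * indicator (E j) \<omega>) \<omega>"
    using \<open>finite J\<close> by (rule AE_finite_allI) (rule nn_cond_exp_prod[OF H], use E in simp)
  ultimately show ?thesis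
    unfolding E_def by eventually_elim simp
qed

lemma (in prob_space) nn_cond_exp_indep_discrete:
  fixes w :: "'a \<Rightarrow> 'c::countable" and Y :: "'a \<Rightarrow> 'd::topological_space"
  assumes F: "subalgebra M F" and "finite J"
    and w: "w \<in> measurable M (count_space UNIV)" "\<forall>\<omega>\<in>space M. w \<omega> \<in> J"
    and indep: "\<forall>A\<in>sets F. \<forall>j. prob (A \<inter> (w -` {j} \<inter> space M)) = prob A * prob (w -` {j} \<inter> space M)"
    and Y: "Y \<in> borel_measurable F"
    and h: "\<And>j. h j \<in> borel_measurable borel" "\<And>j u. 0 \<le> h j u"
  shows "AE \<omega> in M. nn_cond_exp M F (\<lambda>\<omega>. ennreal (h (w \<omega>) (Y \<omega>))) \<omega>
           = ennreal (\<integral>\<omega>'. h (w \<omega>') (Y \<omega>) \<partial>M)"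
proof -
  interpret finite_measure_subalgebra M F by unfold_locales (rule F)
  have "(\<lambda>\<omega>. ennreal (h j (Y \<omega>))) \<in> borel_measurable F" for j
    using measurable_compose[OF Y h(1)] by simp
  with \<open>finite J\<close> w have "AE \<omega> in M. nn_cond_exp M F (\<lambda>\<omega>. ennreal (h (w \<omega>) (Y \<omega>))) \<omega>
      = (\<Sum>j\<in>J. ennreal (h j (Y \<omega>)) * nn_cond_exp M F (indicator (w -` {j} \<inter> space M)) \<omega>)"
    by (rule nn_cond_exp_comp_finite_range[where H = "\<lambda>j \<omega>. ennreal (h j (Y \<omega>))"])
  moreover have "AE \<omega> in M. \<forall>j\<in>J. nn_cond_exp M F (indicator (w -` {j} \<inter> space M)) \<omega>
      = ennreal (prob (w -` {j} \<inter> space M))"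
    using \<open>finite J\<close> w(1) indep
    by (intro AE_finite_allI nn_cond_exp_indicator_indep[OF F] measurable_sets) auto
  ultimately show ?thesis
  proof eventually_elim
    case (elim \<omega>)
    have "(\<integral>\<omega>'. h (w \<omega>') (Y \<omega>) \<partial>M) = (\<Sum>j\<in>J. h j (Y \<omega>) * prob (w -` {j} \<inter> space M))"
      using \<open>finite J\<close> w by (rule integral_comp_finite_range)
    with elim h(2) show ?case
      by (simp add: sum_ennreal[symmetric] ennreal_mult)
  qed
qed

lemma enn2real_le_diff_of_add_le:
  fixes a :: ennreal
  assumes "a + ennreal q \<le> ennreal p" "0 \<le> q" "0 \<le> p"
  shows "enn2real a \<le> p - q"
proof -
  obtain r where r: "a = ennreal r" "0 \<le> r"
    using assms(1) by (cases a) (auto simp: top_unique)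
  with assms have "r + q \<le> p"
    by (simp add: ennreal_plus[symmetric] del: ennreal_plus)
  with r show ?thesis by simp
qed

lemma (in sigma_finite_subalgebra) real_cond_exp_le_diff_of_nn_cond_exp:
  assumes "\<Phi> \<in> borel_measurable M" "R \<in> borel_measurable M" "P \<in> borel_measurable F"
    and bound: "\<forall>\<omega>\<in>space M. 0 \<le> \<Phi> \<omega> \<and> 0 \<le> R \<omega> \<and> \<Phi> \<omega> + R \<omega> \<le> P \<omega>"
    and R: "AE \<omega> in M. nn_cond_exp M F (\<lambda>\<omega>. ennreal (R \<omega>)) \<omega> = ennreal (Q \<omega>)" "\<And>\<omega>. 0 \<le> Q \<omega>"
  shows "AE \<omega> in M. real_cond_exp M F \<Phi> \<omega> \<le> P \<omega> - Q \<omega>"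
proof -
  have P_M: "P \<in> borel_measurable M"
    using assms(3) by (rule measurable_from_subalg[OF subalg])
  have "AE \<omega> in M. nn_cond_exp M F (\<lambda>\<omega>. ennreal (\<Phi> \<omega>)) \<omega> + nn_cond_exp M F (\<lambda>\<omega>. ennreal (R \<omega>)) \<omega>
      = nn_cond_exp M F (\<lambda>\<omega>. ennreal (\<Phi> \<omega>) + ennreal (R \<omega>)) \<omega>"
    using assms(1,2) by (intro nn_cond_exp_sum) auto
  moreover have "AE \<omega> in M. nn_cond_exp M F (\<lambda>\<omega>. ennreal (\<Phi> \<omega>) + ennreal (R \<omega>)) \<omega>
      \<le> nn_cond_exp M F (\<lambda>\<omega>. ennreal (P \<omega>)) \<omega>"
    using bound assms(1,2) P_M
    by (intro nn_cond_exp_mono AE_I2) (auto simp: ennreal_plus[symmetric] simp del: ennreal_plus)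
  moreover have "AE \<omega> in M. ennreal (P \<omega>) = nn_cond_exp M F (\<lambda>\<omega>. ennreal (P \<omega>)) \<omega>"
    using assms(3) by (intro nn_cond_exp_F_meas) auto
  moreover have "AE \<omega> in M. nn_cond_exp M F (\<lambda>\<omega>. ennreal (- \<Phi> \<omega>)) \<omega> = nn_cond_exp M F (\<lambda>_. 0) \<omega>"
    using bound assms(1) by (intro nn_cond_exp_cong AE_I2) (auto simp: ennreal_neg)
  moreover have "AE \<omega> in M. 0 = nn_cond_exp M F (\<lambda>_. 0) \<omega>"
    by (rule nn_cond_exp_F_meas) simp
  ultimately show ?thesis
    using R(1) AE_space
  proof eventually_elim
    case (elim \<omega>)
    then have "nn_cond_exp M F (\<lambda>\<omega>. ennreal (\<Phi> \<omega>)) \<omega> + ennreal (Q \<omega>) \<le> ennreal (P \<omega>)"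
      by simp
    moreover have "0 \<le> P \<omega>"
      using bound elim(7) by fastforce
    ultimately show ?case
      using elim R(2) by (simp add: real_cond_exp_def enn2real_le_diff_of_add_le)
  qed
qed

lemma (in prob_space) real_cond_exp_batch_proj_le:
  fixes Y :: "'a \<Rightarrow> 'd::euclidean_space"
  assumes F: "subalgebra M F" and "finite J" "1 \<le> b"
    and samples: "\<forall>r\<in>{1..b}. w r \<in> measurable M (count_space UNIV)"
    and range: "\<forall>r\<in>{1..b}. \<forall>\<omega>\<in>space M. w r \<omega> \<in> J"
    and sets: "\<forall>j\<in>J. convex (S j) \<and> closed (S j) \<and> z \<in> S j"
    and indep: "\<forall>A\<in>sets F. \<forall>j. prob (A \<inter> (w 1 -` {j} \<inter> space M)) = prob A * prob (w 1 -` {j} \<inter> space M)"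
    and Y: "Y \<in> borel_measurable F"
    and Z: "\<forall>\<omega>\<in>space M. Z \<omega> = batch_proj S (\<lambda>r. w r \<omega>) b (Y \<omega>)"
  shows "AE \<omega> in M. real_cond_exp M F (\<lambda>\<omega>. (norm (Z \<omega> - z))\<^sup>2) \<omega>
           \<le> (norm (Y \<omega> - z))\<^sup>2 - (\<integral>\<omega>'. (infdist (Y \<omega>) (S (w 1 \<omega>')))\<^sup>2 \<partial>M)"
proof -
  interpret finite_measure_subalgebra M F by unfold_locales (rule F)
  have "1 \<in> {1..b}" using \<open>1 \<le> b\<close> by simp
  have Y_M: "Y \<in> borel_measurable M"
    using Y by (rule measurable_from_subalg[OF F])
  have "(\<lambda>\<omega>. batch_proj S (\<lambda>r. w r \<omega>) b (Y \<omega>)) \<in> borel_measurable M"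
    by (rule borel_measurable_batch_proj[where J = J]) (use sets samples range Y_M in auto)
  then have "Z \<in> borel_measurable M"
    by (rule measurable_cong[THEN iffD1, rotated]) (use Z in simp)
  have dist_sq: "(\<lambda>u. (infdist u (S j))\<^sup>2) \<in> borel_measurable borel" for j
    by (intro borel_measurable_continuous_onI continuous_intros)
  show ?thesis
  proof (rule real_cond_exp_le_diff_of_nn_cond_exp)
    show "(\<lambda>\<omega>. (norm (Z \<omega> - z))\<^sup>2) \<in> borel_measurable M"
      using \<open>Z \<in> borel_measurable M\<close> by measurable
    have "(\<lambda>\<omega>. (infdist (Y \<omega>) (S j))\<^sup>2) \<in> borel_measurable M" for j
      using measurable_compose[OF Y_M dist_sq] by simp
    moreover have "w 1 \<in> measurable M (count_space UNIV)"
      using samples \<open>1 \<in> {1..b}\<close> by blast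
    ultimately show "(\<lambda>\<omega>. (infdist (Y \<omega>) (S (w 1 \<omega>)))\<^sup>2) \<in> borel_measurable M"
      by (rule measurable_compose_countable)
    show "(\<lambda>\<omega>. (norm (Y \<omega> - z))\<^sup>2) \<in> borel_measurable F"
      using Y by measurable
    show "\<forall>\<omega>\<in>space M. 0 \<le> (norm (Z \<omega> - z))\<^sup>2 \<and> 0 \<le> (infdist (Y \<omega>) (S (w 1 \<omega>)))\<^sup>2
        \<and> (norm (Z \<omega> - z))\<^sup>2 + (infdist (Y \<omega>) (S (w 1 \<omega>)))\<^sup>2 \<le> (norm (Y \<omega> - z))\<^sup>2"
    proof
      fix \<omega> assume "\<omega> \<in> space M"
      then have "(norm (Z \<omega> - z))\<^sup>2 + (infdist (Y \<omega>) (S (w 1 \<omega>)))\<^sup>2 \<le> (norm (Y \<omega> - z))\<^sup>2"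
        unfolding Z[rule_format, OF \<open>\<omega> \<in> space M\<close>]
        by (intro batch_proj_sq_dist_le[OF \<open>1 \<le> b\<close>]) (use sets range in blast)
      then show "0 \<le> (norm (Z \<omega> - z))\<^sup>2 \<and> 0 \<le> (infdist (Y \<omega>) (S (w 1 \<omega>)))\<^sup>2
          \<and> (norm (Z \<omega> - z))\<^sup>2 + (infdist (Y \<omega>) (S (w 1 \<omega>)))\<^sup>2 \<le> (norm (Y \<omega> - z))\<^sup>2"
        by simp
    qed
    show "AE \<omega> in M. nn_cond_exp M F (\<lambda>\<omega>. ennreal ((infdist (Y \<omega>) (S (w 1 \<omega>)))\<^sup>2)) \<omega>
        = ennreal (\<integral>\<omega>'. (infdist (Y \<omega>) (S (w 1 \<omega>')))\<^sup>2 \<partial>M)"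
      using samples range \<open>1 \<in> {1..b}\<close>
      by (intro nn_cond_exp_indep_discrete[OF F \<open>finite J\<close> _ _ indep Y dist_sq]) auto
  qed simp
qed

\<comment> \<open>\<open>descent_scalar_bound\<close> needs \<open>1 \<le> c\<close> to absorb \<open>(\<alpha> \<parallel>\<nabla>f(v)\<parallel>)\<^sup>2 / c\<close>\<close>
lemma (in prob_space) infdist_regularity_const_ge_1:
  assumes "finite J" "w \<in> measurable M (count_space UNIV)" "\<forall>\<omega>\<in>space M. w \<omega> \<in> J"
    and "\<forall>j\<in>J. X \<subseteq> S j" "X \<noteq> {}" "0 < c"
    and regular: "\<And>y. (infdist y X)\<^sup>2 \<le> c * (\<integral>\<omega>. (infdist y (S (w \<omega>)))\<^sup>2 \<partial>M)"
  shows "1 \<le> c \<or> (\<forall>y. infdist y X = 0)"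
proof (cases "1 \<le> c")
  case False
  have "infdist y X = 0" for y
  proof -
    let ?p = "\<lambda>j. prob (w -` {j} \<inter> space M)"
    have "(\<integral>\<omega>. (infdist y (S (w \<omega>)))\<^sup>2 \<partial>M) = (\<Sum>j\<in>J. (infdist y (S j))\<^sup>2 * ?p j)"
      using assms(1-3) by (rule integral_comp_finite_range)
    also have "\<dots> \<le> (\<Sum>j\<in>J. (infdist y X)\<^sup>2 * ?p j)"
      using assms(4,5)
      by (intro sum_mono mult_right_mono power_mono infdist_mono infdist_nonneg) auto
    also have "\<dots> = (infdist y X)\<^sup>2 * (\<integral>\<omega>. 1 \<partial>M)"
      using integral_comp_finite_range[OF assms(1-3), of "\<lambda>_. 1"] by (simp add: sum_distrib_left)
    finally have "(infdist y X)\<^sup>2 \<le> c * (infdist y X)\<^sup>2"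
      using regular[of y] \<open>0 < c\<close> by (simp add: prob_space order_trans mult_left_mono)
    with False show ?thesis
      by (simp add: mult_le_cancel_right1)
  qed
  then show ?thesis by blast
qed simp

lemma (in prob_space) indep_sets_prob_Int:
  assumes "indep_sets G I" "i \<in> I" "j \<in> I" "i \<noteq> j" "A \<in> G i" "B \<in> G j"
  shows "prob (A \<inter> B) = prob A * prob B"
proof -
  have "prob (\<Inter>t\<in>{i, j}. if t = i then A else B) = (\<Prod>t\<in>{i, j}. prob (if t = i then A else B))"
    using assms by (intro indep_setsD[OF assms(1)]) auto
  with \<open>i \<noteq> j\<close> show ?thesis by (simp add: Int_commute)
qed

lemma (in prob_space) minibatch_step_cond_exp_le:
  fixes V :: "'a \<Rightarrow> 'd::euclidean_space" and f :: "'d \<Rightarrow> real"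
  assumes F: "subalgebra M F" and "finite J" "1 \<le> b"
    and samples: "\<forall>r\<in>{1..b}. w r \<in> measurable M (count_space UNIV)"
    and range: "\<forall>r\<in>{1..b}. \<forall>\<omega>\<in>space M. w r \<omega> \<in> J"
    and sets: "\<forall>j\<in>J. convex (S j) \<and> closed (S j) \<and> X \<subseteq> S j"
    and X: "closed X" "X \<noteq> {}" "z \<in> X"
    and convex: "convex_on UNIV f" and deriv: "\<And>y. (f has_derivative (\<lambda>h. g y \<bullet> h)) (at y)"
    and lipschitz: "\<And>y y'. norm (g y - g y') \<le> L * norm (y - y')"
    and bound: "\<And>y. y \<in> X \<Longrightarrow> norm (g y) \<le> G"
    and "0 < \<alpha>" "0 < c"
    and regular: "\<And>y. (infdist y X)\<^sup>2 \<le> c * (\<integral>\<omega>. (infdist y (S (w 1 \<omega>)))\<^sup>2 \<partial>M)"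
    and indep: "\<forall>A\<in>sets F. \<forall>j. prob (A \<inter> (w 1 -` {j} \<inter> space M)) = prob A * prob (w 1 -` {j} \<inter> space M)"
    and V: "V \<in> borel_measurable F"
    and Z: "\<forall>\<omega>\<in>space M. Z \<omega> = batch_proj S (\<lambda>r. w r \<omega>) b (V \<omega> - \<alpha> *\<^sub>R g (V \<omega>))"
  shows "AE \<omega> in M. real_cond_exp M F (\<lambda>\<omega>. (norm (Z \<omega> - z))\<^sup>2) \<omega>
           \<le> (1 + (8 * L\<^sup>2 + 16 * c * L\<^sup>2) * \<alpha>\<^sup>2) * (norm (V \<omega> - z))\<^sup>2
              - 2 * \<alpha> * (f (closest_point X (V \<omega>)) - f z)
              - (3 / (8 * c) - 2 * \<alpha> * L) * (infdist (V \<omega>) X)\<^sup>2 + (8 * c + 8) * \<alpha>\<^sup>2 * G\<^sup>2"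
proof -
  have "1 \<in> {1..b}" using \<open>1 \<le> b\<close> by simp
  have "continuous_on UNIV g"
    using lipschitz by (rule continuous_on_of_norm_diff_le)
  with V have "(\<lambda>\<omega>. V \<omega> - \<alpha> *\<^sub>R g (V \<omega>)) \<in> borel_measurable F"
    by (rule borel_measurable_gradient_step)
  moreover have "\<forall>j\<in>J. convex (S j) \<and> closed (S j) \<and> z \<in> S j"
    using sets \<open>z \<in> X\<close> by blast
  ultimately have cond: "AE \<omega> in M. real_cond_exp M F (\<lambda>\<omega>. (norm (Z \<omega> - z))\<^sup>2) \<omega>
      \<le> (norm (V \<omega> - \<alpha> *\<^sub>R g (V \<omega>) - z))\<^sup>2
         - (\<integral>\<omega>'. (infdist (V \<omega> - \<alpha> *\<^sub>R g (V \<omega>)) (S (w 1 \<omega>')))\<^sup>2 \<partial>M)"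
    using indep Z by (intro real_cond_exp_batch_proj_le[OF F \<open>finite J\<close> \<open>1 \<le> b\<close> samples range])
  have c: "1 \<le> c \<or> (\<forall>y. infdist y X = 0)"
    using \<open>finite J\<close> samples range sets \<open>X \<noteq> {}\<close> \<open>0 < c\<close> \<open>1 \<in> {1..b}\<close>
    by (intro infdist_regularity_const_ge_1[where w = "w 1" and S = S, OF _ _ _ _ _ _ regular]) blast+
  show ?thesis
    using cond
  proof eventually_elim
    case (elim \<omega>)
    let ?y = "V \<omega> - \<alpha> *\<^sub>R g (V \<omega>)"
    have "(infdist ?y X)\<^sup>2 / c \<le> (\<integral>\<omega>'. (infdist ?y (S (w 1 \<omega>')))\<^sup>2 \<partial>M)"
      using regular[of ?y] \<open>0 < c\<close> by (simp add: divide_le_eq mult.commute)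
    moreover have "(norm (?y - z))\<^sup>2 - (infdist ?y X)\<^sup>2 / c
      \<le> (1 + (8 * L\<^sup>2 + 16 * c * L\<^sup>2) * \<alpha>\<^sup>2) * (norm (V \<omega> - z))\<^sup>2
         - 2 * \<alpha> * (f (closest_point X (V \<omega>)) - f z)
         - (3 / (8 * c) - 2 * \<alpha> * L) * (infdist (V \<omega>) X)\<^sup>2 + (8 * c + 8) * \<alpha>\<^sup>2 * G\<^sup>2"
      by (rule gradient_step_descent_bound[OF convex deriv lipschitz bound X \<open>0 < \<alpha>\<close> \<open>0 < c\<close> c])
    ultimately show ?case
      using elim by linarith
  qed
qed

theorem lemma9:
  fixes M :: "'b measure" and m b :: nat
    and Ic :: "nat set" and Iset :: "nat \<Rightarrow> nat set" and Xc :: "nat \<Rightarrow> 'a::euclidean_space set"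
    and f :: "nat \<Rightarrow> 'a \<Rightarrow> real" and gf :: "nat \<Rightarrow> 'a \<Rightarrow> 'a"
    and L Gf c :: real
    and W :: "nat \<Rightarrow> nat \<Rightarrow> nat \<Rightarrow> real" and \<alpha> :: "nat \<Rightarrow> real"
    and x :: "nat \<Rightarrow> nat \<Rightarrow> 'b \<Rightarrow> 'a"
    and Om :: "nat \<Rightarrow> nat \<Rightarrow> nat \<Rightarrow> 'b \<Rightarrow> nat"
  defines "X \<equiv> \<Inter>i\<in>{..<m}. \<Inter>j\<in>Iset i. Xc j"
    and "v \<equiv> \<lambda>k i \<omega>. \<Sum>j<m. W k i j *\<^sub>R x k j \<omega>"
    and "F \<equiv> Ftil M m b (x 0) Om"
    and "A \<equiv> 8 * L\<^sup>2 + 16 * c * L\<^sup>2"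
    and "B \<equiv> 8 * c + 8"
  assumes M: "prob_space M"
    and fin_I: "finite Ic"
    and part_sub: "\<forall>i<m. Iset i \<subseteq> Ic"
    and part_cover: "(\<Union>i<m. Iset i) = Ic"
    and part_disj: "\<forall>i<m. \<forall>i'<m. i \<noteq> i' \<longrightarrow> Iset i \<inter> Iset i' = {}"
    and X_ne: "X \<noteq> {}"
    and Xc_closed: "\<forall>j\<in>Ic. closed (Xc j)"
    and Xc_convex: "\<forall>j\<in>Ic. convex (Xc j)"
    and f_convex: "\<forall>i<m. convex_on UNIV (f i)"
    and f_grad: "\<forall>i<m. \<forall>y. (f i has_derivative (\<lambda>h. gf i y \<bullet> h)) (at y)"
    and grad_lip: "\<forall>i<m. \<forall>y z. norm (gf i y - gf i z) \<le> L * norm (y - z)"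
    and grad_bd: "\<forall>i<m. \<forall>y\<in>X. norm (gf i y) \<le> Gf"
    and c_pos: "c > 0"
    and A3: "\<forall>i<m. \<forall>k. \<forall>r\<in>{1..b}. \<forall>y.
               infdist y X ^ 2 \<le> c * (\<integral>\<omega>. infdist y (Xc (Om i k r \<omega>)) ^ 2 \<partial>M)"
    and step_pos: "\<forall>k. \<alpha> k > 0"
    and b_pos: "b \<ge> 1"
    and x0_meas: "\<forall>i<m. x 0 i \<in> borel_measurable M"
    and Om_meas: "\<forall>i<m. \<forall>k. \<forall>r\<in>{1..b}. Om i k r \<in> measurable M (count_space UNIV)"
    and Om_range: "\<forall>i<m. \<forall>k. \<forall>r\<in>{1..b}. \<forall>\<omega>\<in>space M. Om i k r \<omega> \<in> Iset i"
    and Om_distr: "\<forall>i<m. \<forall>k. \<forall>r\<in>{1..b}.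
               distr M (count_space UNIV) (Om i k r) = distr M (count_space UNIV) (Om i 0 1)"
    and Om_indep: "\<forall>i<m. \<forall>k. prob_space.indep_sets M
               (\<lambda>t. case t of None \<Rightarrow> sets (F k)
                             | Some r \<Rightarrow> {Om i k r -` S \<inter> space M | S. True})
               (insert None (Some ` {1..b}))"
    and x_step: "\<forall>k. \<forall>i<m. \<forall>\<omega>\<in>space M.
               x (Suc k) i \<omega> = batch_proj Xc (\<lambda>r. Om i k r \<omega>) b
                                   (v k i \<omega> - \<alpha> k *\<^sub>R gf i (v k i \<omega>))"
  shows "\<forall>xc\<in>X. \<forall>i<m. \<forall>k. AE \<omega> in M.
           real_cond_exp M (F k) (\<lambda>\<omega>. (norm (x (Suc k) i \<omega> - xc))\<^sup>2) \<omega>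
             \<le> (1 + A * (\<alpha> k)\<^sup>2) * (norm (v k i \<omega> - xc))\<^sup>2
                - 2 * \<alpha> k * (f i (closest_point X (v k i \<omega>)) - f i xc)
                - (3 / (8 * c) - 2 * \<alpha> k * L) * (infdist (v k i \<omega>) X)\<^sup>2
                + B * (\<alpha> k)\<^sup>2 * Gf\<^sup>2"
proof (intro ballI allI impI)
  fix xc i k assume "xc \<in> X" "i < m"
  interpret prob_space M by (rule M)
  have sets: "\<forall>j\<in>Ic. convex (Xc j) \<and> closed (Xc j) \<and> X \<subseteq> Xc j"
    using part_cover Xc_closed Xc_convex unfolding X_def by blast
  have "closed X"
    unfolding X_def using part_sub Xc_closed by (intro closed_INT) blast
  have "\<forall>i<m. continuous_on UNIV (gf i)"
    using grad_lip by (blast intro: continuous_on_of_norm_diff_le)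
  moreover have "\<forall>i<m. \<forall>k. \<forall>r\<in>{1..b}. \<forall>\<omega>\<in>space M. Om i k r \<omega> \<in> Ic"
    using Om_range part_sub by blast
  moreover have "\<forall>j\<in>Ic. convex (Xc j) \<and> closed (Xc j) \<and> Xc j \<noteq> {}"
    using sets X_ne by blast
  ultimately have "x k j \<in> borel_measurable (F k)" if "j < m" for j
    unfolding F_def using x0_meas Om_meas x_step[unfolded v_def] that
    by (intro borel_measurable_Ftil_iterate[where S = Xc and g = gf and W = W and \<alpha> = \<alpha>]) blast+
  then have V: "v k i \<in> borel_measurable (F k)"
    unfolding v_def by (intro borel_measurable_sum borel_measurable_scaleR measurable_const) auto
  have indep: "\<forall>A\<in>sets (F k). \<forall>j. prob (A \<inter> (Om i k 1 -` {j} \<inter> space M))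
      = prob A * prob (Om i k 1 -` {j} \<inter> space M)"
    using indep_sets_prob_Int[OF Om_indep[rule_format, OF \<open>i < m\<close>, of k], of None "Some 1"] b_pos
    by auto
  have F_sub: "subalgebra M (F k)"
    unfolding F_def using x0_meas Om_meas by (rule subalgebra_Ftil)
  have "Iset i \<subseteq> Ic" using part_sub \<open>i < m\<close> by blast
  then have "finite (Iset i)" using fin_I by (rule finite_subset)
  have samples: "\<forall>r\<in>{1..b}. Om i k r \<in> measurable M (count_space UNIV)"
    and range: "\<forall>r\<in>{1..b}. \<forall>\<omega>\<in>space M. Om i k r \<omega> \<in> Iset i"
    and sets_i: "\<forall>j\<in>Iset i. convex (Xc j) \<and> closed (Xc j) \<and> X \<subseteq> Xc j"
    and regular: "\<And>y. (infdist y X)\<^sup>2 \<le> c * (\<integral>\<omega>. (infdist y (Xc (Om i k 1 \<omega>)))\<^sup>2 \<partial>M)"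
    and Z: "\<forall>\<omega>\<in>space M. x (Suc k) i \<omega> = batch_proj Xc (\<lambda>r. Om i k r \<omega>) b (v k i \<omega> - \<alpha> k *\<^sub>R gf i (v k i \<omega>))"
    using Om_meas Om_range sets \<open>Iset i \<subseteq> Ic\<close> A3 b_pos x_step \<open>i < m\<close> by auto
  show "AE \<omega> in M. real_cond_exp M (F k) (\<lambda>\<omega>. (norm (x (Suc k) i \<omega> - xc))\<^sup>2) \<omega>
             \<le> (1 + A * (\<alpha> k)\<^sup>2) * (norm (v k i \<omega> - xc))\<^sup>2
                - 2 * \<alpha> k * (f i (closest_point X (v k i \<omega>)) - f i xc)
                - (3 / (8 * c) - 2 * \<alpha> k * L) * (infdist (v k i \<omega>) X)\<^sup>2
                + B * (\<alpha> k)\<^sup>2 * Gf\<^sup>2"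
    unfolding A_def B_def
    using \<open>i < m\<close> step_pos
    by (intro minibatch_step_cond_exp_le[OF F_sub \<open>finite (Iset i)\<close> b_pos samples range
          sets_i \<open>closed X\<close> X_ne \<open>xc \<in> X\<close> _ _ _ _ _ c_pos regular indep V Z]
        f_convex[rule_format] f_grad[rule_format] grad_lip[rule_format] grad_bd[rule_format]) auto
qed

end
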